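(* Let $\mathcal A$ be a weakly idempotent complete pre-additive category and $M$ a simplicial module in $\mathcal A$. For every $n\ge0$ the family $\{\partial_{n,i}:M_n\to M_{n-1}\}_{1\le i\le n}$ has a joint kernel $\iota:N_n(M)\to M_n$ (the "intersection" $\bigcap_{i=1}^n\ker\partial_{n,i}$), and the idempotent $p_n$ splits through it: there is $r:M_n\to N_n(M)$ with $r\iota=1$ and $\iota r=p_n$. Consequently $M_n\cong N_n(M)\oplus D_n(M)$ where $D_n(M)$ is the image (splitting) of $1-p_n$.
   Context: Let $\mathcal A$ be a pre-additive category. Let $\Delta$ be the category with objects $[n]$, $n\ge0$, and morphisms $[m]\to[n]$ the weakly monotone maps $f:\mathbb Z\to\mathbb Z$ with $f(j+m+1)=f(j)+n+1$, $f(0)\ge0$, $f(m)\le n$ (equivalently, weakly monotone maps $\{0,\dots,m\}\to\{0,\dots,n\}$). Let $\varepsilon^n_i:[n-1]\to[n]$ ($0\le i\le n$) skip $i$ ($\varepsilon^n_i(j)=j$ for $j<i$, $j+1$ for $j\ge i$), and $\eta^n_i:[n+1]\to[n]$ ($0\le i\le n$) repeat $i$ ($\eta^n_i(j)=j$ for $j\le i$, $j-1$ for $j>i$). A simplicial module is a functor $M:\Delta^{op}\to\mathcal A$; write $M_n=M([n])$, $\partial_{n,i}=M(\varepsilon^n_i):M_n\to M_{n-1}$, $s_{n,i}=M(\eta^n_i):M_n\to M_{n+1}$. Define $p_n=(1-s_{n-1,0}\partial_{n,1})(1-s_{n-1,1}\partial_{n,2})\cdots(1-s_{n-1,n-1}\partial_{n,n})$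 ($p_0=1$). A pre-additive category is weakly idempotent complete if every morphism $f$ admitting $g$ with $fg=1$ has a kernel. An idempotent $p$ on $A$ splits if $p=\iota r$ with $r\iota=1$. *)

theory Defs
  imports Main
begin

text \<open>A pre-additive category, encoded by its object set, hom-sets, composition
  (cmp g f = g o f, i.e. f first), identities, and abelian group structure on each hom-set.\<close>

record ('o,'m) preadd =
  Ob :: "'o set"
  Hm :: "'o \<Rightarrow> 'o \<Rightarrow> 'm set"
  cmp :: "'m \<Rightarrow> 'm \<Rightarrow> 'm"
  ident :: "'o \<Rightarrow> 'm"
  pls :: "'m \<Rightarrow> 'm \<Rightarrow> 'm"
  zer :: "'o \<Rightarrow> 'o \<Rightarrow> 'm"
  ngt :: "'m \<Rightarrow> 'm"

definition preadditive :: "('o,'m,'x) preadd_scheme \<Rightarrow> bool" where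
  "preadditive C \<longleftrightarrow>
    (\<forall>a\<in>Ob C. ident C a \<in> Hm C a a) \<and>
    (\<forall>a\<in>Ob C. \<forall>b\<in>Ob C. \<forall>c\<in>Ob C. \<forall>f\<in>Hm C a b. \<forall>g\<in>Hm C b c. cmp C g f \<in> Hm C a c) \<and>
    (\<forall>a\<in>Ob C. \<forall>b\<in>Ob C. \<forall>c\<in>Ob C. \<forall>d\<in>Ob C. \<forall>f\<in>Hm C a b. \<forall>g\<in>Hm C b c. \<forall>h\<in>Hm C c d.
        cmp C h (cmp C g f) = cmp C (cmp C h g) f) \<and>
    (\<forall>a\<in>Ob C. \<forall>b\<in>Ob C. \<forall>f\<in>Hm C a b. cmp C (ident C b) f = f \<and> cmp C f (ident C a) = f) \<and>
    (\<forall>a\<in>Ob C. \<forall>b\<in>Ob C.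
        zer C a b \<in> Hm C a b \<and>
        (\<forall>f\<in>Hm C a b. \<forall>g\<in>Hm C a b. pls C f g \<in> Hm C a b) \<and>
        (\<forall>f\<in>Hm C a b. ngt C f \<in> Hm C a b) \<and>
        (\<forall>f\<in>Hm C a b. \<forall>g\<in>Hm C a b. \<forall>h\<in>Hm C a b. pls C (pls C f g) h = pls C f (pls C g h)) \<and>
        (\<forall>f\<in>Hm C a b. \<forall>g\<in>Hm C a b. pls C f g = pls C g f) \<and>
        (\<forall>f\<in>Hm C a b. pls C (zer C a b) f = f) \<and>
        (\<forall>f\<in>Hm C a b. pls C f (ngt C f) = zer C a b)) \<and>
    (\<forall>a\<in>Ob C. \<forall>b\<in>Ob C. \<forall>c\<in>Ob C. \<forall>f\<in>Hm C a b. \<forall>g\<in>Hm C a b. \<forall>h\<in>Hm C b c.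
        cmp C h (pls C f g) = pls C (cmp C h f) (cmp C h g)) \<and>
    (\<forall>a\<in>Ob C. \<forall>b\<in>Ob C. \<forall>c\<in>Ob C. \<forall>f\<in>Hm C b c. \<forall>g\<in>Hm C b c. \<forall>h\<in>Hm C a b.
        cmp C (pls C f g) h = pls C (cmp C f h) (cmp C g h))"

definition is_kernel :: "('o,'m,'x) preadd_scheme \<Rightarrow> 'o \<Rightarrow> 'o \<Rightarrow> 'm \<Rightarrow> 'o \<Rightarrow> 'm \<Rightarrow> bool" where
  "is_kernel C a b f K k \<longleftrightarrow>
    K \<in> Ob C \<and> k \<in> Hm C K a \<and> cmp C f k = zer C K b \<and>
    (\<forall>X\<in>Ob C. \<forall>h\<in>Hm C X a. cmp C f h = zer C X b \<longrightarrow>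
        (\<exists>!u. u \<in> Hm C X K \<and> cmp C k u = h))"

definition is_joint_kernel ::
  "('o,'m,'x) preadd_scheme \<Rightarrow> 'o \<Rightarrow> 'o \<Rightarrow> 'i set \<Rightarrow> ('i \<Rightarrow> 'm) \<Rightarrow> 'o \<Rightarrow> 'm \<Rightarrow> bool" where
  "is_joint_kernel C a b I d K k \<longleftrightarrow>
    K \<in> Ob C \<and> k \<in> Hm C K a \<and> (\<forall>i\<in>I. cmp C (d i) k = zer C K b) \<and>
    (\<forall>X\<in>Ob C. \<forall>h\<in>Hm C X a. (\<forall>i\<in>I. cmp C (d i) h = zer C X b) \<longrightarrow>
        (\<exists>!u. u \<in> Hm C X K \<and> cmp C k u = h))"

definition weakly_idempotent_complete :: "('o,'m,'x) preadd_scheme \<Rightarrow> bool" where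
  "weakly_idempotent_complete C \<longleftrightarrow>
    (\<forall>a\<in>Ob C. \<forall>b\<in>Ob C. \<forall>f\<in>Hm C a b. \<forall>g\<in>Hm C b a.
        cmp C f g = ident C b \<longrightarrow> (\<exists>K k. is_kernel C a b f K k))"

text \<open>Morphisms [m] \<rightarrow> [n]: weakly monotone maps {0..m} \<rightarrow> {0..n}, made extensional
  (value 0 outside {0..m}).\<close>
definition delta_hom :: "nat \<Rightarrow> nat \<Rightarrow> (nat \<Rightarrow> nat) set" where
  "delta_hom m n = {f. (\<forall>i\<le>m. f i \<le> n) \<and> (\<forall>i j. i \<le> j \<longrightarrow> j \<le> m \<longrightarrow> f i \<le> f j)
                      \<and> (\<forall>i. m < i \<longrightarrow> f i = 0)}"

definition delta_id :: "nat \<Rightarrow> nat \<Rightarrow> nat" where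
  "delta_id n = (\<lambda>i. if i \<le> n then i else 0)"

definition delta_comp :: "nat \<Rightarrow> (nat \<Rightarrow> nat) \<Rightarrow> (nat \<Rightarrow> nat) \<Rightarrow> nat \<Rightarrow> nat" where
  "delta_comp k g f = (\<lambda>i. if i \<le> k then g (f i) else 0)"

definition coface :: "nat \<Rightarrow> nat \<Rightarrow> nat \<Rightarrow> nat" where
  "coface n i = (\<lambda>j. if j \<le> n - 1 then (if j < i then j else j + 1) else 0)"

definition codegen :: "nat \<Rightarrow> nat \<Rightarrow> nat \<Rightarrow> nat" where
  "codegen n i = (\<lambda>j. if j \<le> n + 1 then (if j \<le> i then j else j - 1) else 0)"

text \<open>A functor M : \<Delta>^op \<rightarrow> C, given by objects Mo n = M_n and, for f : [m] \<rightarrow> [n],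
  Mf m n f = M(f) : M_n \<rightarrow> M_m.\<close>
definition simplicial_module ::
  "('o,'m,'x) preadd_scheme \<Rightarrow> (nat \<Rightarrow> 'o) \<Rightarrow> (nat \<Rightarrow> nat \<Rightarrow> (nat \<Rightarrow> nat) \<Rightarrow> 'm) \<Rightarrow> bool" where
  "simplicial_module C Mo Mf \<longleftrightarrow>
    (\<forall>n. Mo n \<in> Ob C) \<and>
    (\<forall>m n. \<forall>f\<in>delta_hom m n. Mf m n f \<in> Hm C (Mo n) (Mo m)) \<and>
    (\<forall>n. Mf n n (delta_id n) = ident C (Mo n)) \<and>
    (\<forall>k m n. \<forall>f\<in>delta_hom k m. \<forall>g\<in>delta_hom m n.
        Mf k n (delta_comp k g f) = cmp C (Mf k m f) (Mf m n g))"

definition face :: "(nat \<Rightarrow> nat \<Rightarrow> (nat \<Rightarrow> nat) \<Rightarrow> 'm) \<Rightarrow> nat \<Rightarrow> nat \<Rightarrow> 'm" where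
  "face Mf n i = Mf (n - 1) n (coface n i)"

definition degen :: "(nat \<Rightarrow> nat \<Rightarrow> (nat \<Rightarrow> nat) \<Rightarrow> 'm) \<Rightarrow> nat \<Rightarrow> nat \<Rightarrow> 'm" where
  "degen Mf n i = Mf (n + 1) n (codegen n i)"

definition pfactor :: "('o,'m,'x) preadd_scheme \<Rightarrow> (nat \<Rightarrow> 'o) \<Rightarrow> (nat \<Rightarrow> nat \<Rightarrow> (nat \<Rightarrow> nat) \<Rightarrow> 'm)
    \<Rightarrow> nat \<Rightarrow> nat \<Rightarrow> 'm" where
  "pfactor C Mo Mf n i =
     pls C (ident C (Mo n)) (ngt C (cmp C (degen Mf (n - 1) i) (face Mf n (i + 1))))"

fun ppart :: "('o,'m,'x) preadd_scheme \<Rightarrow> (nat \<Rightarrow> 'o) \<Rightarrow> (nat \<Rightarrow> nat \<Rightarrow> (nat \<Rightarrow> nat) \<Rightarrow> 'm)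
    \<Rightarrow> nat \<Rightarrow> nat \<Rightarrow> 'm" where
  "ppart C Mo Mf n 0 = ident C (Mo n)"
| "ppart C Mo Mf n (Suc k) = cmp C (ppart C Mo Mf n k) (pfactor C Mo Mf n k)"

definition pn :: "('o,'m,'x) preadd_scheme \<Rightarrow> (nat \<Rightarrow> 'o) \<Rightarrow> (nat \<Rightarrow> nat \<Rightarrow> (nat \<Rightarrow> nat) \<Rightarrow> 'm)
    \<Rightarrow> nat \<Rightarrow> 'm" where
  "pn C Mo Mf n = ppart C Mo Mf n n"

end

(*
  Write p(n,k) = (1 - s_0 d_1) ... (1 - s_(k-1) d_k) on M_n, so that p_n = p(n,n).  By induction
  on n and k, p(n,k) splits as iota r with r iota = 1 through a joint kernel iota : N -> M_n of
  the faces d_1, ..., d_k.  For the step from k to k+1 the simplicial identities give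
  d_(k+1) s_k = 1 and d_(k+1) p(n,k) = p(n-1,k) d_(k+1); hence the restriction
  f = r' d_(k+1) iota : N -> N' of d_(k+1) to the splittings for (n,k) and (n-1,k) has the
  section r s_k iota'.  Weak idempotent completeness provides a kernel kappa of f, the composite
  iota kappa is a joint kernel of d_1, ..., d_(k+1), and p(n,k+1) = p(n,k) (1 - s_k d_(k+1))
  splits through it.  Finally, the complementary idempotent 1 - p_n splits through a kernel of
  the retraction r, which exists for the same reason.
*)

theory Submission
  imports Defs
begin

lemma is_kernel_iff_joint_kernel:
  "is_kernel C a b f K k \<longleftrightarrow> is_joint_kernel C a b {()} (\<lambda>_. f) K k"
  unfolding is_kernel_def is_joint_kernel_def by simp

definition joint_kernel_splitting ::
  "('o,'m,'x) preadd_scheme \<Rightarrow> 'o \<Rightarrow> 'o \<Rightarrow> 'i set \<Rightarrow> ('i \<Rightarrow> 'm) \<Rightarrow> 'o \<Rightarrow> 'm \<Rightarrow> 'm \<Rightarrow> 'm \<Rightarrow> bool"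
  where "joint_kernel_splitting C a b I D N \<iota> r p \<longleftrightarrow>
    is_joint_kernel C a b I D N \<iota> \<and> r \<in> Hm C a N \<and> cmp C r \<iota> = ident C N \<and> cmp C \<iota> r = p"

locale preadditive_category =
  fixes C :: "('o,'m,'x) preadd_scheme"
  assumes preadditive: "preadditive C"
begin

abbreviation cmp_infix (infixr "\<cdot>" 70) where "g \<cdot> f \<equiv> cmp C g f"
abbreviation pls_infix (infixl "\<oplus>" 65) where "f \<oplus> g \<equiv> pls C f g"
abbreviation ngt_prefix ("\<ominus> _" [81] 80) where "\<ominus> f \<equiv> ngt C f"

lemma ident_closed [intro]: "a \<in> Ob C \<Longrightarrow> ident C a \<in> Hm C a a"
  and cmp_closed [intro]:
    "\<lbrakk>a \<in> Ob C; b \<in> Ob C; c \<in> Ob C; f \<in> Hm C a b; g \<in> Hm C b c\<rbrakk> \<Longrightarrow> g \<cdot> f \<in> Hm C a c"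
  and cmp_assoc:
    "\<lbrakk>a \<in> Ob C; b \<in> Ob C; c \<in> Ob C; d \<in> Ob C; f \<in> Hm C a b; g \<in> Hm C b c; h \<in> Hm C c d\<rbrakk>
      \<Longrightarrow> h \<cdot> (g \<cdot> f) = (h \<cdot> g) \<cdot> f"
  and cmp_ident_left: "\<lbrakk>a \<in> Ob C; b \<in> Ob C; f \<in> Hm C a b\<rbrakk> \<Longrightarrow> ident C b \<cdot> f = f"
  and cmp_ident_right: "\<lbrakk>a \<in> Ob C; b \<in> Ob C; f \<in> Hm C a b\<rbrakk> \<Longrightarrow> f \<cdot> ident C a = f"
  and zer_closed [intro]: "\<lbrakk>a \<in> Ob C; b \<in> Ob C\<rbrakk> \<Longrightarrow> zer C a b \<in> Hm C a b"
  and pls_closed [intro]: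
    "\<lbrakk>a \<in> Ob C; b \<in> Ob C; f \<in> Hm C a b; g \<in> Hm C a b\<rbrakk> \<Longrightarrow> f \<oplus> g \<in> Hm C a b"
  and ngt_closed [intro]: "\<lbrakk>a \<in> Ob C; b \<in> Ob C; f \<in> Hm C a b\<rbrakk> \<Longrightarrow> \<ominus> f \<in> Hm C a b"
  and pls_ngt: "\<lbrakk>a \<in> Ob C; b \<in> Ob C; f \<in> Hm C a b\<rbrakk> \<Longrightarrow> f \<oplus> \<ominus> f = zer C a b"
  and cmp_distrib_left:
    "\<lbrakk>a \<in> Ob C; b \<in> Ob C; c \<in> Ob C; f \<in> Hm C a b; g \<in> Hm C a b; h \<in> Hm C b c\<rbrakk>
      \<Longrightarrow> h \<cdot> (f \<oplus> g) = h \<cdot> f \<oplus> h \<cdot> g"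
  and cmp_distrib_right:
    "\<lbrakk>a \<in> Ob C; b \<in> Ob C; c \<in> Ob C; f \<in> Hm C b c; g \<in> Hm C b c; h \<in> Hm C a b\<rbrakk>
      \<Longrightarrow> (f \<oplus> g) \<cdot> h = f \<cdot> h \<oplus> g \<cdot> h"
  using preadditive unfolding preadditive_def by simp_all

lemma pls_assoc:
    "\<lbrakk>a \<in> Ob C; b \<in> Ob C; f \<in> Hm C a b; g \<in> Hm C a b; h \<in> Hm C a b\<rbrakk>
      \<Longrightarrow> f \<oplus> g \<oplus> h = f \<oplus> (g \<oplus> h)"
  and pls_commute: "\<lbrakk>a \<in> Ob C; b \<in> Ob C; f \<in> Hm C a b; g \<in> Hm C a b\<rbrakk> \<Longrightarrow> f \<oplus> g = g \<oplus> f"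
  and pls_zer_left: "\<lbrakk>a \<in> Ob C; b \<in> Ob C; f \<in> Hm C a b\<rbrakk> \<Longrightarrow> zer C a b \<oplus> f = f"
  using preadditive unfolding preadditive_def by metis+

lemma pls_zer_right: "\<lbrakk>a \<in> Ob C; b \<in> Ob C; f \<in> Hm C a b\<rbrakk> \<Longrightarrow> f \<oplus> zer C a b = f"
  using pls_commute[of a b f "zer C a b"] pls_zer_left[of a b f] by (simp add: zer_closed)

lemma pls_left_cancel:
  assumes a: "a \<in> Ob C" and b: "b \<in> Ob C"
    and f: "f \<in> Hm C a b" and g: "g \<in> Hm C a b" and h: "h \<in> Hm C a b"
    and eq: "f \<oplus> g = f \<oplus> h"
  shows "g = h"
proof -
  have nf: "\<ominus> f \<in> Hm C a b" using a b f by (rule ngt_closed)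
  have inv: "\<ominus> f \<oplus> f = zer C a b"
    using pls_commute[OF a b nf f] pls_ngt[OF a b f] by simp
  have "g = \<ominus> f \<oplus> f \<oplus> g" using inv pls_zer_left[OF a b g] by simp
  also have "\<dots> = \<ominus> f \<oplus> (f \<oplus> h)" using pls_assoc[OF a b nf f g] eq by simp
  also have "\<dots> = h" using pls_assoc[OF a b nf f h] inv pls_zer_left[OF a b h] by simp
  finally show ?thesis .
qed

lemma ngt_unique:
  "\<lbrakk>a \<in> Ob C; b \<in> Ob C; f \<in> Hm C a b; g \<in> Hm C a b; f \<oplus> g = zer C a b\<rbrakk> \<Longrightarrow> g = \<ominus> f"
  by (rule pls_left_cancel) (auto simp: pls_ngt)

lemma ngt_zer: "\<lbrakk>a \<in> Ob C; b \<in> Ob C\<rbrakk> \<Longrightarrow> \<ominus> zer C a b = zer C a b"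
  using ngt_unique[of a b "zer C a b" "zer C a b"] pls_zer_left[of a b "zer C a b"]
  by (simp add: zer_closed)

lemma cmp_zer_right:
  assumes a: "a \<in> Ob C" and b: "b \<in> Ob C" and c: "c \<in> Ob C" and h: "h \<in> Hm C b c"
  shows "h \<cdot> zer C a b = zer C a c"
proof (rule pls_left_cancel[OF a c])
  have z: "zer C a b \<in> Hm C a b" using a b by (rule zer_closed)
  have "h \<cdot> zer C a b \<oplus> h \<cdot> zer C a b = h \<cdot> (zer C a b \<oplus> zer C a b)"
    using cmp_distrib_left[OF a b c z z h] by simp
  also have "\<dots> = h \<cdot> zer C a b \<oplus> zer C a c"
    using pls_zer_left[OF a b z] pls_zer_right[OF a c cmp_closed[OF a b c z h]] by simp
  finally show "h \<cdot> zer C a b \<oplus> h \<cdot> zer C a b = h \<cdot> zer C a b \<oplus> zer C a c" .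
qed (use a b c h in auto)

lemma cmp_zer_left:
  assumes a: "a \<in> Ob C" and b: "b \<in> Ob C" and c: "c \<in> Ob C" and h: "h \<in> Hm C a b"
  shows "zer C b c \<cdot> h = zer C a c"
proof (rule pls_left_cancel[OF a c])
  have z: "zer C b c \<in> Hm C b c" using b c by (rule zer_closed)
  have "zer C b c \<cdot> h \<oplus> zer C b c \<cdot> h = (zer C b c \<oplus> zer C b c) \<cdot> h"
    using cmp_distrib_right[OF a b c z z h] by simp
  also have "\<dots> = zer C b c \<cdot> h \<oplus> zer C a c"
    using pls_zer_left[OF b c z] pls_zer_right[OF a c cmp_closed[OF a b c h z]] by simp
  finally show "zer C b c \<cdot> h \<oplus> zer C b c \<cdot> h = zer C b c \<cdot> h \<oplus> zer C a c" .
qed (use a b c h in auto)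

lemma cmp_ngt_right:
  assumes "a \<in> Ob C" "b \<in> Ob C" "c \<in> Ob C" "f \<in> Hm C a b" "h \<in> Hm C b c"
  shows "h \<cdot> \<ominus> f = \<ominus> (h \<cdot> f)"
proof -
  have "h \<cdot> f \<oplus> h \<cdot> \<ominus> f = zer C a c"
    using assms by (simp add: cmp_distrib_left[symmetric] cmp_zer_right ngt_closed pls_ngt)
  then show ?thesis
    using assms by (intro ngt_unique) auto
qed

lemma cmp_ngt_left:
  assumes "a \<in> Ob C" "b \<in> Ob C" "c \<in> Ob C" "f \<in> Hm C b c" "h \<in> Hm C a b"
  shows "(\<ominus> f) \<cdot> h = \<ominus> (f \<cdot> h)"
proof -
  have "f \<cdot> h \<oplus> (\<ominus> f) \<cdot> h = zer C a c"
    using assms by (simp add: cmp_distrib_right[symmetric] cmp_zer_left ngt_closed pls_ngt)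
  then show ?thesis
    using assms by (intro ngt_unique) auto
qed

lemma cmp_complement:
  "\<lbrakk>a \<in> Ob C; c \<in> Ob C; x \<in> Hm C a a; h \<in> Hm C a c\<rbrakk>
    \<Longrightarrow> h \<cdot> (ident C a \<oplus> \<ominus> x) = h \<oplus> \<ominus> (h \<cdot> x)"
  by (simp add: cmp_distrib_left cmp_ident_right cmp_ngt_right ident_closed ngt_closed)

lemma complement_cmp:
  "\<lbrakk>a \<in> Ob C; c \<in> Ob C; x \<in> Hm C a a; h \<in> Hm C c a\<rbrakk>
    \<Longrightarrow> (ident C a \<oplus> \<ominus> x) \<cdot> h = h \<oplus> \<ominus> (x \<cdot> h)"
  by (simp add: cmp_distrib_right cmp_ident_left cmp_ngt_left ident_closed ngt_closed)

lemma pls_complement: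
  assumes a: "a \<in> Ob C" and p: "p \<in> Hm C a a"
  shows "p \<oplus> (ident C a \<oplus> \<ominus> p) = ident C a"
proof -
  have "p \<oplus> (ident C a \<oplus> \<ominus> p) = p \<oplus> \<ominus> p \<oplus> ident C a"
    using a p by (simp add: ident_closed ngt_closed pls_assoc pls_commute)
  then show ?thesis
    using a p by (simp add: ident_closed pls_ngt pls_zer_left)
qed

lemma joint_kernel_ex1:
  assumes "is_joint_kernel C a b I D K k" and "X \<in> Ob C" and "h \<in> Hm C X a"
    and "\<forall>i\<in>I. D i \<cdot> h = zer C X b"
  shows "\<exists>!u. u \<in> Hm C X K \<and> k \<cdot> u = h"
  using assms unfolding is_joint_kernel_def by blast

lemma joint_kernel_factor:
  assumes "is_joint_kernel C a b I D K k" and "X \<in> Ob C" and "h \<in> Hm C X a"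
    and "\<forall>i\<in>I. D i \<cdot> h = zer C X b"
  obtains u where "u \<in> Hm C X K" and "k \<cdot> u = h"
  using joint_kernel_ex1[OF assms] by blast

lemma joint_kernel_cancel:
  assumes ker: "is_joint_kernel C a b I D K k"
    and a: "a \<in> Ob C" and b: "b \<in> Ob C" and D: "\<forall>i\<in>I. D i \<in> Hm C a b"
    and X: "X \<in> Ob C" and u: "u \<in> Hm C X K" and v: "v \<in> Hm C X K"
    and eq: "k \<cdot> u = k \<cdot> v"
  shows "u = v"
proof -
  have K: "K \<in> Ob C" "k \<in> Hm C K a" and Dk: "\<forall>i\<in>I. D i \<cdot> k = zer C K b"
    using ker unfolding is_joint_kernel_def by auto
  have Dku: "D i \<cdot> (k \<cdot> u) = zer C X b" if "i \<in> I" for i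
  proof -
    have Di: "D i \<in> Hm C a b" using D that by blast
    have "D i \<cdot> (k \<cdot> u) = (D i \<cdot> k) \<cdot> u" using cmp_assoc[OF X K(1) a b u K(2) Di] .
    also have "\<dots> = zer C X b" using Dk that cmp_zer_left[OF X K(1) b u] by simp
    finally show ?thesis .
  qed
  have "\<exists>!w. w \<in> Hm C X K \<and> k \<cdot> w = k \<cdot> u"
    by (rule joint_kernel_ex1[OF ker X cmp_closed[OF X K(1) a u K(2)]]) (simp add: Dku)
  then show ?thesis using u v eq by metis
qed

lemma joint_kernel_splitting_empty:
  assumes "a \<in> Ob C"
  shows "joint_kernel_splitting C a b {} D a (ident C a) (ident C a) (ident C a)"
  using assms unfolding joint_kernel_splitting_def is_joint_kernel_def
  by (auto simp: cmp_ident_left ident_closed)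

lemma joint_kernel_splitting_zer:
  assumes split: "joint_kernel_splitting C a b I D N \<iota> r p"
    and a: "a \<in> Ob C" and X: "X \<in> Ob C" and x: "x \<in> Hm C X a"
    and Dx: "\<forall>i\<in>I. D i \<cdot> x = zer C X b" and rx: "r \<cdot> x = zer C X N"
  shows "x = zer C X a"
proof -
  have N: "N \<in> Ob C" "\<iota> \<in> Hm C N a" "r \<in> Hm C a N" and r\<iota>: "r \<cdot> \<iota> = ident C N"
    and ker: "is_joint_kernel C a b I D N \<iota>"
    using split unfolding joint_kernel_splitting_def is_joint_kernel_def by auto
  obtain u where u: "u \<in> Hm C X N" and \<iota>u: "\<iota> \<cdot> u = x"
    using joint_kernel_factor[OF ker X x Dx] .
  have "u = (r \<cdot> \<iota>) \<cdot> u" using N X u r\<iota> by (simp add: cmp_ident_left)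
  also have "\<dots> = zer C X N" using N a X u \<iota>u rx by (simp flip: cmp_assoc)
  finally show ?thesis using N a X \<iota>u by (simp add: cmp_zer_right)
qed

lemma joint_kernel_insert:
  assumes a: "a \<in> Ob C" and b: "b \<in> Ob C" and c: "c \<in> Ob C"
    and D: "\<forall>i\<in>insert j I. D i \<in> Hm C a b"
    and \<iota>_ker: "is_joint_kernel C a b I D N \<iota>"
    and \<kappa>_ker: "is_kernel C N c f K \<kappa>"
    and g: "g \<in> Hm C b c" and f: "f = g \<cdot> D j \<cdot> \<iota>"
    and zero: "D j \<cdot> \<iota> \<cdot> \<kappa> = zer C K b"
  shows "is_joint_kernel C a b (insert j I) D K (\<iota> \<cdot> \<kappa>)"
proof -
  have N: "N \<in> Ob C" "\<iota> \<in> Hm C N a" and D\<iota>: "\<forall>i\<in>I. D i \<cdot> \<iota> = zer C N b"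
    using \<iota>_ker unfolding is_joint_kernel_def by auto
  have \<kappa>_ker': "is_joint_kernel C N c {()} (\<lambda>_. f) K \<kappa>"
    using \<kappa>_ker by (simp only: is_kernel_iff_joint_kernel)
  have K: "K \<in> Ob C" "\<kappa> \<in> Hm C K N"
    using \<kappa>_ker unfolding is_kernel_def by auto
  have Dj: "D j \<in> Hm C a b" using D by blast
  have fH: "f \<in> Hm C N c" unfolding f using a b c N Dj g by blast
  have \<iota>\<kappa>: "\<iota> \<cdot> \<kappa> \<in> Hm C K a" using a N K by blast
  have kills: "D i \<cdot> (\<iota> \<cdot> \<kappa>) = zer C K b" if "i \<in> insert j I" for i
  proof (cases "i = j")
    case True
    then show ?thesis using zero by simp
  next
    case False
    then have i: "i \<in> I" "D i \<in> Hm C a b" using that D by auto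
    have "D i \<cdot> (\<iota> \<cdot> \<kappa>) = (D i \<cdot> \<iota>) \<cdot> \<kappa>" using cmp_assoc[OF K(1) N(1) a b K(2) N(2) i(2)] .
    then show ?thesis using D\<iota> i cmp_zer_left[OF K(1) N(1) b K(2)] by simp
  qed
  have univ: "\<exists>!v. v \<in> Hm C X K \<and> (\<iota> \<cdot> \<kappa>) \<cdot> v = h"
    if X: "X \<in> Ob C" and h: "h \<in> Hm C X a" and Dh: "\<forall>i\<in>insert j I. D i \<cdot> h = zer C X b" for X h
  proof -
    obtain u where u: "u \<in> Hm C X N" and \<iota>u: "\<iota> \<cdot> u = h"
      using joint_kernel_factor[OF \<iota>_ker X h] Dh by blast
    have "f \<cdot> u = g \<cdot> (D j \<cdot> (\<iota> \<cdot> u))"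
      unfolding f using a b c X N Dj g u by (simp add: cmp_assoc cmp_closed)
    also have "\<dots> = zer C X c" using \<iota>u Dh cmp_zer_right[OF X b c g] by simp
    finally obtain v where v: "v \<in> Hm C X K" and \<kappa>v: "\<kappa> \<cdot> v = u"
      using joint_kernel_factor[OF \<kappa>_ker' X u] by blast
    show ?thesis
    proof (rule ex1I)
      show "v \<in> Hm C X K \<and> (\<iota> \<cdot> \<kappa>) \<cdot> v = h"
        using v \<kappa>v \<iota>u cmp_assoc[OF X K(1) N(1) a v K(2) N(2)] by simp
    next
      fix v' assume v': "v' \<in> Hm C X K \<and> (\<iota> \<cdot> \<kappa>) \<cdot> v' = h"
      then have "\<iota> \<cdot> (\<kappa> \<cdot> v') = \<iota> \<cdot> (\<kappa> \<cdot> v)"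
        using v \<kappa>v \<iota>u cmp_assoc[OF X K(1) N(1) a _ K(2) N(2)] by simp
      then have "\<kappa> \<cdot> v' = \<kappa> \<cdot> v"
        using joint_kernel_cancel[OF \<iota>_ker a b _ X] D v v' X K N by blast
      then show "v' = v"
        using joint_kernel_cancel[OF \<kappa>_ker' N(1) c _ X] fH v v' by blast
    qed
  qed
  show ?thesis
    unfolding is_joint_kernel_def using K(1) \<iota>\<kappa> kills univ by simp
qed

lemma restriction_section:
  assumes a: "a \<in> Ob C" and b: "b \<in> Ob C" and N: "N \<in> Ob C" and N': "N' \<in> Ob C"
    and \<iota>: "\<iota> \<in> Hm C N a" and r: "r \<in> Hm C a N" and \<iota>': "\<iota>' \<in> Hm C N' b" and r': "r' \<in> Hm C b N'"
    and d: "d \<in> Hm C a b" and s: "s \<in> Hm C b a"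
    and \<iota>r: "\<iota> \<cdot> r = p" and \<iota>'r': "\<iota>' \<cdot> r' = p'" and r'\<iota>': "r' \<cdot> \<iota>' = ident C N'"
    and ds: "d \<cdot> s = ident C b" and comm: "d \<cdot> p = p' \<cdot> d"
  shows "(r' \<cdot> d \<cdot> \<iota>) \<cdot> (r \<cdot> s \<cdot> \<iota>') = ident C N'"
proof -
  have p: "p \<in> Hm C a a" and p': "p' \<in> Hm C b b"
    using \<iota>r \<iota>'r' a b N N' \<iota> r \<iota>' r' by blast+
  have "(r' \<cdot> d \<cdot> \<iota>) \<cdot> (r \<cdot> s \<cdot> \<iota>') = r' \<cdot> (d \<cdot> p) \<cdot> s \<cdot> \<iota>'"
    using a b N N' \<iota> r \<iota>' r' d s p by (simp add: \<iota>r[symmetric] cmp_assoc cmp_closed)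
  also have "\<dots> = (r' \<cdot> \<iota>' \<cdot> r') \<cdot> (d \<cdot> s) \<cdot> \<iota>'"
    using a b N N' \<iota>' r' d s p' by (simp add: comm \<iota>'r'[symmetric] cmp_assoc cmp_closed)
  also have "\<dots> = ident C N'"
    using b N' \<iota>' r' by (simp add: ds cmp_assoc r'\<iota>' cmp_ident_left cmp_ident_right)
  finally show ?thesis .
qed

lemma kernel_restriction_splitting:
  assumes a: "a \<in> Ob C" and b: "b \<in> Ob C" and N': "N' \<in> Ob C"
    and split: "joint_kernel_splitting C a b I D N \<iota> r p"
    and \<kappa>_ker: "is_kernel C N N' f K \<kappa>" and f: "f \<in> Hm C N N'"
    and d: "d \<in> Hm C a b" and s: "s \<in> Hm C b a"
    and zero: "d \<cdot> \<iota> \<cdot> \<kappa> = zer C K b"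
    and fr: "f \<cdot> r \<cdot> (ident C a \<oplus> \<ominus> (s \<cdot> d)) = zer C a N'"
  obtains \<rho> where "\<rho> \<in> Hm C a K" and "\<rho> \<cdot> (\<iota> \<cdot> \<kappa>) = ident C K"
    and "(\<iota> \<cdot> \<kappa>) \<cdot> \<rho> = p \<cdot> (ident C a \<oplus> \<ominus> (s \<cdot> d))"
proof -
  define \<pi> where "\<pi> = ident C a \<oplus> \<ominus> (s \<cdot> d)"
  have N: "N \<in> Ob C" "\<iota> \<in> Hm C N a" "r \<in> Hm C a N" and r\<iota>: "r \<cdot> \<iota> = ident C N"
    and \<iota>r: "\<iota> \<cdot> r = p"
    using split unfolding joint_kernel_splitting_def is_joint_kernel_def by auto
  have \<kappa>_ker': "is_joint_kernel C N N' {()} (\<lambda>_. f) K \<kappa>"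
    using \<kappa>_ker by (simp only: is_kernel_iff_joint_kernel)
  have K: "K \<in> Ob C" "\<kappa> \<in> Hm C K N"
    using \<kappa>_ker unfolding is_kernel_def by auto
  have sd: "s \<cdot> d \<in> Hm C a a" using a b d s by blast
  have \<pi>: "\<pi> \<in> Hm C a a" unfolding \<pi>_def using a sd by blast
  obtain \<rho> where \<rho>: "\<rho> \<in> Hm C a K" and \<kappa>\<rho>: "\<kappa> \<cdot> \<rho> = r \<cdot> \<pi>"
    using joint_kernel_factor[OF \<kappa>_ker' a] a N \<pi> fr \<pi>_def by blast
  have "\<kappa> \<cdot> (\<rho> \<cdot> (\<iota> \<cdot> \<kappa>)) = r \<cdot> (\<pi> \<cdot> (\<iota> \<cdot> \<kappa>))"
    using a K N \<rho> \<pi> by (simp add: \<kappa>\<rho>[symmetric] cmp_assoc cmp_closed)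
  also have "\<pi> \<cdot> (\<iota> \<cdot> \<kappa>) = \<iota> \<cdot> \<kappa>"
    using a b K N d s sd zero
    by (simp add: \<pi>_def complement_cmp cmp_zer_right ngt_zer pls_zer_right cmp_closed flip: cmp_assoc)
  also have "r \<cdot> (\<iota> \<cdot> \<kappa>) = \<kappa> \<cdot> ident C K"
    using a K N by (simp add: cmp_assoc r\<iota> cmp_ident_left cmp_ident_right)
  finally have \<rho>\<iota>\<kappa>: "\<rho> \<cdot> (\<iota> \<cdot> \<kappa>) = ident C K"
    using joint_kernel_cancel[OF \<kappa>_ker' N(1) N' _ K(1)] f a K N \<rho> by blast
  have "(\<iota> \<cdot> \<kappa>) \<cdot> \<rho> = \<iota> \<cdot> (\<kappa> \<cdot> \<rho>)" using a K N \<rho> by (simp add: cmp_assoc)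
  also have "\<dots> = p \<cdot> \<pi>" using a N \<pi> by (simp add: \<kappa>\<rho> \<iota>r cmp_assoc)
  finally show thesis using that \<rho> \<rho>\<iota>\<kappa> \<pi>_def by blast
qed

end

locale weakly_idempotent_complete_category = preadditive_category +
  assumes weakly_idempotent_complete: "weakly_idempotent_complete C"
begin

lemma retraction_kernel:
  assumes "a \<in> Ob C" "b \<in> Ob C" "f \<in> Hm C a b" "g \<in> Hm C b a" "f \<cdot> g = ident C b"
  obtains K k where "is_kernel C a b f K k"
  using assms weakly_idempotent_complete unfolding weakly_idempotent_complete_def by blast

lemma complement_splits:
  assumes a: "a \<in> Ob C" and N: "N \<in> Ob C" and \<iota>: "\<iota> \<in> Hm C N a" and r: "r \<in> Hm C a N"
    and r\<iota>: "r \<cdot> \<iota> = ident C N" and \<iota>r: "\<iota> \<cdot> r = p"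
  obtains D j s where "D \<in> Ob C" "j \<in> Hm C D a" "s \<in> Hm C a D" "s \<cdot> j = ident C D"
    "j \<cdot> s = ident C a \<oplus> \<ominus> p" "r \<cdot> j = zer C D N" "s \<cdot> \<iota> = zer C N D"
    "\<iota> \<cdot> r \<oplus> j \<cdot> s = ident C a"
proof -
  obtain D j where ker: "is_joint_kernel C a N {()} (\<lambda>_. r) D j"
    using retraction_kernel[OF a N r \<iota> r\<iota>] is_kernel_iff_joint_kernel by metis
  have D: "D \<in> Ob C" and j: "j \<in> Hm C D a" and rj: "r \<cdot> j = zer C D N"
    using ker unfolding is_joint_kernel_def by auto
  have p: "p \<in> Hm C a a" using \<iota>r a N \<iota> r by blast
  have rp: "r \<cdot> p = r" using a N \<iota> r r\<iota> by (simp add: \<iota>r[symmetric] cmp_assoc cmp_ident_left)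
  define q where "q = ident C a \<oplus> \<ominus> p"
  have q: "q \<in> Hm C a a" unfolding q_def using a p by blast
  have "r \<cdot> q = zer C a N"
    unfolding q_def using a N r p rp by (simp add: cmp_complement pls_ngt)
  then obtain s where s: "s \<in> Hm C a D" and js: "j \<cdot> s = q"
    using joint_kernel_factor[OF ker a q] by auto
  have "j \<cdot> (s \<cdot> j) = q \<cdot> j" using a D j s js by (simp add: cmp_assoc)
  also have "\<dots> = j \<cdot> ident C D"
    using a N D \<iota> r j rj p
    by (simp add: q_def \<iota>r[symmetric] complement_cmp cmp_zer_right ngt_zer pls_zer_right
        cmp_ident_right cmp_closed flip: cmp_assoc)
  finally have sj: "s \<cdot> j = ident C D"
    using joint_kernel_cancel[OF ker a N _ D, of "s \<cdot> j" "ident C D"] a N D r s j by blast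
  have "j \<cdot> (s \<cdot> \<iota>) = q \<cdot> \<iota>" using a D N j s \<iota> js by (simp add: cmp_assoc)
  also have "\<dots> = j \<cdot> zer C N D"
    using a N D \<iota> r j r\<iota> p
    by (simp add: q_def \<iota>r[symmetric] complement_cmp cmp_zer_right pls_ngt cmp_ident_right
        cmp_closed flip: cmp_assoc)
  finally have s\<iota>: "s \<cdot> \<iota> = zer C N D"
    using joint_kernel_cancel[OF ker a N _ N cmp_closed[OF N a D \<iota> s] zer_closed[OF N D]] r by blast
  show thesis
    using that[OF D j s sj js[unfolded q_def] rj s\<iota>] pls_complement[OF a p] \<iota>r js q_def by simp
qed

lemma restriction_kernel:
  assumes a: "a \<in> Ob C" and b: "b \<in> Ob C" and b': "b' \<in> Ob C"
    and d: "d \<in> Hm C a b" and E: "\<forall>i\<in>I'. E i \<in> Hm C b b'"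
    and split: "joint_kernel_splitting C a b I D N \<iota> r p"
    and split': "joint_kernel_splitting C b b' I' E N' \<iota>' r' p'"
    and s: "s \<in> Hm C b a" and ds: "d \<cdot> s = ident C b" and comm: "d \<cdot> p = p' \<cdot> d"
    and kill: "\<forall>i\<in>I'. E i \<cdot> d \<cdot> \<iota> = zer C N b'"
  obtains K \<kappa> where "is_kernel C N N' (r' \<cdot> d \<cdot> \<iota>) K \<kappa>" and "d \<cdot> \<iota> \<cdot> \<kappa> = zer C K b"
proof -
  have N: "N \<in> Ob C" "\<iota> \<in> Hm C N a" "r \<in> Hm C a N" and \<iota>r: "\<iota> \<cdot> r = p"
    using split unfolding joint_kernel_splitting_def is_joint_kernel_def by auto
  have N': "N' \<in> Ob C" "\<iota>' \<in> Hm C N' b" "r' \<in> Hm C b N'"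
    and r'\<iota>': "r' \<cdot> \<iota>' = ident C N'" and \<iota>'r': "\<iota>' \<cdot> r' = p'"
    using split' unfolding joint_kernel_splitting_def is_joint_kernel_def by auto
  have f: "r' \<cdot> d \<cdot> \<iota> \<in> Hm C N N'" using a b N N' d by blast
  have g: "r \<cdot> s \<cdot> \<iota>' \<in> Hm C N' N" using a b N N' s by blast
  obtain K \<kappa> where \<kappa>_ker: "is_kernel C N N' (r' \<cdot> d \<cdot> \<iota>) K \<kappa>"
    using retraction_kernel[OF N(1) N'(1) f g]
      restriction_section[OF a b N(1) N'(1) N(2,3) N'(2,3) d s \<iota>r \<iota>'r' r'\<iota>' ds comm] by blast
  have K: "K \<in> Ob C" "\<kappa> \<in> Hm C K N" and f\<kappa>: "(r' \<cdot> d \<cdot> \<iota>) \<cdot> \<kappa> = zer C K N'"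
    using \<kappa>_ker unfolding is_kernel_def by auto
  have "d \<cdot> \<iota> \<cdot> \<kappa> = zer C K b"
  proof (rule joint_kernel_splitting_zer[OF split' b K(1)])
    show "d \<cdot> \<iota> \<cdot> \<kappa> \<in> Hm C K b" using a b K N d by blast
    show "\<forall>i\<in>I'. E i \<cdot> d \<cdot> \<iota> \<cdot> \<kappa> = zer C K b'"
    proof
      fix i assume i: "i \<in> I'"
      then have "E i \<cdot> d \<cdot> \<iota> \<cdot> \<kappa> = (E i \<cdot> d \<cdot> \<iota>) \<cdot> \<kappa>"
        using a b b' K N d E by (simp add: cmp_assoc cmp_closed)
      then show "E i \<cdot> d \<cdot> \<iota> \<cdot> \<kappa> = zer C K b'"
        using i kill cmp_zer_left[OF K(1) N(1) b' K(2)] by simp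
    qed
    show "r' \<cdot> d \<cdot> \<iota> \<cdot> \<kappa> = zer C K N'"
      using f\<kappa> a b K N N' d by (simp add: cmp_assoc cmp_closed)
  qed
  then show thesis using that \<kappa>_ker by blast
qed

lemma joint_kernel_splitting_insert:
  assumes a: "a \<in> Ob C" and b: "b \<in> Ob C" and b': "b' \<in> Ob C"
    and D: "\<forall>i\<in>insert j I. D i \<in> Hm C a b" and E: "\<forall>i\<in>I'. E i \<in> Hm C b b'"
    and split: "joint_kernel_splitting C a b I D N \<iota> r p"
    and split': "joint_kernel_splitting C b b' I' E N' \<iota>' r' p'"
    and s: "s \<in> Hm C b a" and Djs: "D j \<cdot> s = ident C b"
    and comm: "D j \<cdot> p = p' \<cdot> D j"
    and kill: "\<forall>i\<in>I'. E i \<cdot> D j \<cdot> \<iota> = zer C N b'"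
  shows "\<exists>K \<kappa> \<rho>. joint_kernel_splitting C a b (insert j I) D K \<kappa> \<rho> (p \<cdot> (ident C a \<oplus> \<ominus> (s \<cdot> D j)))"
proof -
  have N: "N \<in> Ob C" "\<iota> \<in> Hm C N a" "r \<in> Hm C a N" and \<iota>r: "\<iota> \<cdot> r = p"
    and \<iota>_ker: "is_joint_kernel C a b I D N \<iota>"
    using split unfolding joint_kernel_splitting_def is_joint_kernel_def by auto
  have N': "N' \<in> Ob C" "\<iota>' \<in> Hm C N' b" "r' \<in> Hm C b N'" and \<iota>'r': "\<iota>' \<cdot> r' = p'"
    using split' unfolding joint_kernel_splitting_def is_joint_kernel_def by auto
  have p': "p' \<in> Hm C b b" using \<iota>'r' b N' by blast
  have d: "D j \<in> Hm C a b" using D by blast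
  obtain K \<kappa> where \<kappa>_ker: "is_kernel C N N' (r' \<cdot> D j \<cdot> \<iota>) K \<kappa>" and zero: "D j \<cdot> \<iota> \<cdot> \<kappa> = zer C K b"
    using restriction_kernel[OF a b b' d E split split' s Djs comm kill] .
  have \<iota>\<kappa>_ker: "is_joint_kernel C a b (insert j I) D K (\<iota> \<cdot> \<kappa>)"
    using joint_kernel_insert[OF a b N'(1) D \<iota>_ker \<kappa>_ker N'(3) refl zero] .
  define \<pi> where "\<pi> = ident C a \<oplus> \<ominus> (s \<cdot> D j)"
  have \<pi>: "\<pi> \<in> Hm C a a" unfolding \<pi>_def using a b d s by blast
  have d\<pi>: "D j \<cdot> \<pi> = zer C a b"
    using a b d s by (simp add: \<pi>_def cmp_complement cmp_assoc Djs cmp_ident_left pls_ngt cmp_closed)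
  have "(r' \<cdot> D j \<cdot> \<iota>) \<cdot> r \<cdot> \<pi> = r' \<cdot> (D j \<cdot> p) \<cdot> \<pi>"
    using a b N N' d \<pi> by (simp add: \<iota>r[symmetric] cmp_assoc cmp_closed)
  also have "\<dots> = r' \<cdot> p' \<cdot> (D j \<cdot> \<pi>)"
    using a b N' d p' \<pi> by (simp add: comm cmp_assoc cmp_closed)
  also have "\<dots> = zer C a N'"
    using a b N' p' by (simp add: d\<pi> cmp_zer_right)
  finally obtain \<rho> where "\<rho> \<in> Hm C a K" "\<rho> \<cdot> (\<iota> \<cdot> \<kappa>) = ident C K" "(\<iota> \<cdot> \<kappa>) \<cdot> \<rho> = p \<cdot> \<pi>"
    using kernel_restriction_splitting[OF a b N'(1) split \<kappa>_ker _ d s zero] a b N N' d \<pi>_def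
    by blast
  then show ?thesis
    using \<iota>\<kappa>_ker \<pi>_def unfolding joint_kernel_splitting_def by blast
qed

end

lemma coface_delta_hom: "coface (Suc m) i \<in> delta_hom m (Suc m)"
  unfolding delta_hom_def coface_def by auto

lemma codegen_delta_hom: "i \<le> m \<Longrightarrow> codegen m i \<in> delta_hom (Suc m) m"
  unfolding delta_hom_def codegen_def by auto

locale simplicial_object =
  fixes C :: "('o,'m,'x) preadd_scheme"
    and Mo :: "nat \<Rightarrow> 'o" and Mf :: "nat \<Rightarrow> nat \<Rightarrow> (nat \<Rightarrow> nat) \<Rightarrow> 'm"
  assumes simplicial: "simplicial_module C Mo Mf"
begin

lemma Mo_closed: "Mo n \<in> Ob C"
  and Mf_closed: "f \<in> delta_hom m n \<Longrightarrow> Mf m n f \<in> Hm C (Mo n) (Mo m)"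
  and Mf_delta_id: "Mf n n (delta_id n) = ident C (Mo n)"
  and Mf_delta_comp: "\<lbrakk>f \<in> delta_hom k m; g \<in> delta_hom m n\<rbrakk>
    \<Longrightarrow> Mf k n (delta_comp k g f) = cmp C (Mf k m f) (Mf m n g)"
  using simplicial unfolding simplicial_module_def by blast+

lemma Mf_cmp_eq:
  assumes "f \<in> delta_hom k m" "g \<in> delta_hom m n" "f' \<in> delta_hom k m'" "g' \<in> delta_hom m' n"
    and "delta_comp k g f = delta_comp k g' f'"
  shows "cmp C (Mf k m f) (Mf m n g) = cmp C (Mf k m' f') (Mf m' n g')"
  using assms by (simp flip: Mf_delta_comp)

lemma face_closed: "face Mf (Suc m) i \<in> Hm C (Mo (Suc m)) (Mo m)"
  unfolding face_def using Mf_closed[OF coface_delta_hom] by simp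

lemma degen_closed: "i \<le> m \<Longrightarrow> degen Mf m i \<in> Hm C (Mo m) (Mo (Suc m))"
  unfolding degen_def using Mf_closed[OF codegen_delta_hom] by simp

lemma face_degen_eq_ident:
  assumes "k \<le> m"
  shows "cmp C (face Mf (Suc m) (Suc k)) (degen Mf m k) = ident C (Mo m)"
proof -
  have "cmp C (face Mf (Suc m) (Suc k)) (degen Mf m k)
      = Mf m m (delta_comp m (codegen m k) (coface (Suc m) (Suc k)))"
    unfolding face_def degen_def
    using Mf_delta_comp[OF coface_delta_hom codegen_delta_hom[OF assms]] by simp
  also have "delta_comp m (codegen m k) (coface (Suc m) (Suc k)) = delta_id m"
    unfolding delta_comp_def codegen_def coface_def delta_id_def by (auto simp: fun_eq_iff)
  finally show ?thesis by (simp add: Mf_delta_id)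
qed

lemma face_degen_commute:
  assumes "j < k" "k \<le> Suc m"
  shows "cmp C (face Mf (Suc (Suc m)) (Suc k)) (degen Mf (Suc m) j)
    = cmp C (degen Mf m j) (face Mf (Suc m) k)"
  unfolding face_def degen_def diff_Suc_1 Suc_eq_plus1[symmetric]
  using assms
  by (intro Mf_cmp_eq coface_delta_hom codegen_delta_hom)
    (auto simp: delta_comp_def codegen_def coface_def fun_eq_iff)

lemma face_face_commute:
  assumes "i \<le> k"
  shows "cmp C (face Mf (Suc m) i) (face Mf (Suc (Suc m)) (Suc k))
    = cmp C (face Mf (Suc m) k) (face Mf (Suc (Suc m)) i)"
  unfolding face_def diff_Suc_1
  using assms
  by (intro Mf_cmp_eq coface_delta_hom) (auto simp: delta_comp_def coface_def fun_eq_iff)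

end

locale preadditive_simplicial_module =
  preadditive_category C + simplicial_object C Mo Mf for C Mo Mf
begin

lemma pfactor_closed:
  assumes "k \<le> m"
  shows "pfactor C Mo Mf (Suc m) k \<in> Hm C (Mo (Suc m)) (Mo (Suc m))"
proof -
  have "degen Mf m k \<cdot> face Mf (Suc m) (Suc k) \<in> Hm C (Mo (Suc m)) (Mo (Suc m))"
    using cmp_closed[OF Mo_closed Mo_closed Mo_closed face_closed degen_closed[OF assms]] .
  then show ?thesis
    unfolding pfactor_def by (simp add: Mo_closed ident_closed ngt_closed pls_closed)
qed

lemma ppart_closed: "k \<le> n \<Longrightarrow> ppart C Mo Mf n k \<in> Hm C (Mo n) (Mo n)"
proof (induction k)
  case 0
  then show ?case by (simp add: Mo_closed ident_closed)
next
  case (Suc k)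
  then obtain m where n: "n = Suc m" and k: "k \<le> m" by (cases n) auto
  then show ?case
    using Suc cmp_closed[OF Mo_closed Mo_closed Mo_closed pfactor_closed[OF k]] by simp
qed

lemma face_pfactor_commute:
  assumes jk: "j < k" "k \<le> Suc m"
  shows "face Mf (Suc (Suc m)) (Suc k) \<cdot> pfactor C Mo Mf (Suc (Suc m)) j
    = pfactor C Mo Mf (Suc m) j \<cdot> face Mf (Suc (Suc m)) (Suc k)"
proof -
  let ?d = "face Mf (Suc (Suc m)) (Suc k)" and ?s = "degen Mf (Suc m) j"
    and ?d' = "face Mf (Suc (Suc m)) (Suc j)" and ?s\<^sub>0 = "degen Mf m j"
    and ?d\<^sub>0 = "face Mf (Suc m) k" and ?d\<^sub>0' = "face Mf (Suc m) (Suc j)"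
  have j: "j \<le> Suc m" "j \<le> m" using jk by auto
  note homs = Mo_closed[of m] Mo_closed[of "Suc m"] Mo_closed[of "Suc (Suc m)"] face_closed[of "Suc m" "Suc k"] face_closed[of "Suc m" "Suc j"]
    face_closed[of m k] face_closed[of m "Suc j"] degen_closed[OF j(1)] degen_closed[OF j(2)]
  have "?d \<cdot> (?s \<cdot> ?d') = (?s\<^sub>0 \<cdot> ?d\<^sub>0) \<cdot> ?d'"
    using homs by (simp add: cmp_assoc face_degen_commute[OF jk])
  also have "\<dots> = (?s\<^sub>0 \<cdot> ?d\<^sub>0') \<cdot> ?d"
    using homs jk by (simp add: face_face_commute[of "Suc j" k] flip: cmp_assoc)
  finally show ?thesis
    using homs by (simp add: pfactor_def cmp_complement complement_cmp cmp_closed)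
qed

lemma face_ppart_commute:
  assumes "k' \<le> k" and "k \<le> m"
  shows "face Mf (Suc m) (Suc k) \<cdot> ppart C Mo Mf (Suc m) k'
    = ppart C Mo Mf m k' \<cdot> face Mf (Suc m) (Suc k)"
  using assms(1)
proof (induction k')
  case 0
  then show ?case
    using Mo_closed[of m] Mo_closed[of "Suc m"] face_closed[of m "Suc k"]
    by (simp add: cmp_ident_left cmp_ident_right)
next
  case (Suc k')
  then obtain m' where m: "m = Suc m'" using assms(2) by (cases m) auto
  have k': "k' < k" "k \<le> Suc m'" "k' \<le> m" "k' \<le> Suc m" using Suc.prems m assms(2) by auto
  note homs = Mo_closed[of m] Mo_closed[of "Suc m"] face_closed[of m "Suc k"]
    ppart_closed[OF k'(3)] ppart_closed[OF k'(4)] pfactor_closed[of k' m] pfactor_closed[of k' m']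
  have "face Mf (Suc m) (Suc k) \<cdot> ppart C Mo Mf (Suc m) (Suc k')
      = (face Mf (Suc m) (Suc k) \<cdot> ppart C Mo Mf (Suc m) k') \<cdot> pfactor C Mo Mf (Suc m) k'"
    using homs k' by (simp add: cmp_assoc)
  also have "\<dots> = ppart C Mo Mf m k' \<cdot> (face Mf (Suc m) (Suc k) \<cdot> pfactor C Mo Mf (Suc m) k')"
    using homs k' Suc.IH Suc.prems by (simp flip: cmp_assoc)
  also have "\<dots> = ppart C Mo Mf m (Suc k') \<cdot> face Mf (Suc m) (Suc k)"
    using homs k' face_pfactor_commute[OF k'(1,2)] by (simp add: m cmp_assoc)
  finally show ?case .
qed

lemma face_face_joint_kernel_zer:
  assumes k: "k \<le> m" and ker: "is_joint_kernel C (Mo (Suc m)) (Mo m) {1..k} (face Mf (Suc m)) N \<iota>"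
  shows "\<forall>i\<in>{1..k}. face Mf m i \<cdot> face Mf (Suc m) (Suc k) \<cdot> \<iota> = zer C N (Mo (m - 1))"
proof
  fix i assume i: "i \<in> {1..k}"
  then obtain m' where m: "m = Suc m'" using k by (cases m) auto
  have N: "N \<in> Ob C" "\<iota> \<in> Hm C N (Mo (Suc (Suc m')))"
    and kill: "face Mf (Suc (Suc m')) i \<cdot> \<iota> = zer C N (Mo (Suc m'))"
    using ker i unfolding is_joint_kernel_def m by auto
  note homs = Mo_closed[of m'] Mo_closed[of "Suc m'"] Mo_closed[of "Suc (Suc m')"]
    face_closed[of m' i] face_closed[of m' k] face_closed[of "Suc m'" i]
    face_closed[of "Suc m'" "Suc k"] N
  have "face Mf (Suc m') i \<cdot> face Mf (Suc (Suc m')) (Suc k) \<cdot> \<iota>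
      = face Mf (Suc m') k \<cdot> face Mf (Suc (Suc m')) i \<cdot> \<iota>"
    using homs i by (simp add: cmp_assoc face_face_commute)
  also have "\<dots> = zer C N (Mo m')"
    using homs by (simp add: kill cmp_zer_right)
  finally show "face Mf m i \<cdot> face Mf (Suc m) (Suc k) \<cdot> \<iota> = zer C N (Mo (m - 1))"
    by (simp add: m)
qed

end

locale simplicial_module_in_wic_category =
  weakly_idempotent_complete_category C + preadditive_simplicial_module C Mo Mf for C Mo Mf
begin

lemma ppart_splits:
  "k \<le> n \<Longrightarrow> \<exists>N \<iota> r. joint_kernel_splitting C (Mo n) (Mo (n - 1)) {1..k} (face Mf n) N \<iota> r
    (ppart C Mo Mf n k)"
proof (induction n arbitrary: k)
  case 0
  then show ?case using joint_kernel_splitting_empty[OF Mo_closed] by fastforce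
next
  case (Suc m)
  note IH\<^sub>m = Suc.IH
  from Suc.prems show ?case
  proof (induction k)
    case 0
    then show ?case using joint_kernel_splitting_empty[OF Mo_closed] by fastforce
  next
    case (Suc k)
    then have k: "k \<le> m" by simp
    obtain N \<iota> r where split:
      "joint_kernel_splitting C (Mo (Suc m)) (Mo m) {1..k} (face Mf (Suc m)) N \<iota> r
        (ppart C Mo Mf (Suc m) k)"
      using Suc k by auto
    obtain N' \<iota>' r' where split':
      "joint_kernel_splitting C (Mo m) (Mo (m - 1)) {1..k} (face Mf m) N' \<iota>' r' (ppart C Mo Mf m k)"
      using IH\<^sub>m k by blast
    have faces: "\<forall>i\<in>{1..k}. face Mf m i \<in> Hm C (Mo m) (Mo (m - 1))"
      using k face_closed by (cases m) auto
    have "\<exists>N \<iota> r. joint_kernel_splitting C (Mo (Suc m)) (Mo m) (insert (Suc k) {1..k})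
      (face Mf (Suc m)) N \<iota> r (ppart C Mo Mf (Suc m) k \<cdot>
        (ident C (Mo (Suc m)) \<oplus> \<ominus> (degen Mf m k \<cdot> face Mf (Suc m) (Suc k))))"
      using split
      by (intro joint_kernel_splitting_insert[OF Mo_closed Mo_closed Mo_closed _ faces split split'
            degen_closed[OF k] face_degen_eq_ident[OF k] face_ppart_commute[OF order_refl k]
            face_face_joint_kernel_zer[OF k]])
        (auto simp: face_closed joint_kernel_splitting_def)
    moreover have "insert (Suc k) {1..k} = {1..Suc k}" by auto
    ultimately show ?case by (simp add: pfactor_def)
  qed
qed

end

theorem mainTheorem3:
  fixes C :: "('o,'m,'x) preadd_scheme"
    and Mo :: "nat \<Rightarrow> 'o" and Mf :: "nat \<Rightarrow> nat \<Rightarrow> (nat \<Rightarrow> nat) \<Rightarrow> 'm"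
    and n :: nat
  assumes "preadditive C"
    and "weakly_idempotent_complete C"
    and "simplicial_module C Mo Mf"
  shows "\<exists>N \<iota> r. is_joint_kernel C (Mo n) (Mo (n - 1)) {1..n} (face Mf n) N \<iota> \<and>
           r \<in> Hm C (Mo n) N \<and> cmp C r \<iota> = ident C N \<and> cmp C \<iota> r = pn C Mo Mf n \<and>
           (\<exists>D j s. D \<in> Ob C \<and> j \<in> Hm C D (Mo n) \<and> s \<in> Hm C (Mo n) D \<and>
              cmp C s j = ident C D \<and>
              cmp C j s = pls C (ident C (Mo n)) (ngt C (pn C Mo Mf n)) \<and>
              cmp C r j = zer C D N \<and> cmp C s \<iota> = zer C N D \<and>
              pls C (cmp C \<iota> r) (cmp C j s) = ident C (Mo n))"
proof -
  interpret simplicial_module_in_wic_category C Mo Mf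
    using assms by unfold_locales
  obtain N \<iota> r where split:
    "joint_kernel_splitting C (Mo n) (Mo (n - 1)) {1..n} (face Mf n) N \<iota> r (pn C Mo Mf n)"
    using ppart_splits[of n n] unfolding pn_def by blast
  then have N: "N \<in> Ob C" "\<iota> \<in> Hm C N (Mo n)" "r \<in> Hm C (Mo n) N" and r\<iota>: "r \<cdot> \<iota> = ident C N"
    and \<iota>r: "\<iota> \<cdot> r = pn C Mo Mf n"
    unfolding joint_kernel_splitting_def is_joint_kernel_def by auto
  obtain D j s where "D \<in> Ob C" "j \<in> Hm C D (Mo n)" "s \<in> Hm C (Mo n) D" "s \<cdot> j = ident C D"
    "j \<cdot> s = ident C (Mo n) \<oplus> \<ominus> pn C Mo Mf n" "r \<cdot> j = zer C D N" "s \<cdot> \<iota> = zer C N D"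
    "\<iota> \<cdot> r \<oplus> j \<cdot> s = ident C (Mo n)"
    using complement_splits[OF Mo_closed N r\<iota> \<iota>r] .
  then show ?thesis
    using split unfolding joint_kernel_splitting_def by blast
qed

end
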